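(* Fix a maturity $t$ and an underlying security. For each strike $K\ge 0$ let $C(K)$ and $P(K)$ denote the prices of the European call and put of strike $K$ and maturity $t$, and let $F$ be the tradable forward price for delivery at $t$. Assume put-call parity holds for every strike: $C(K)-P(K)+K=F$ for all $K\ge 0$. Assume calls and puts are valued by expectation of terminal payoff, i.e. there exist Borel probability measures $\mu_1,\mu_2$ on $\Omega=[0,\infty)$ with finite first moment such that $C(K)=\int_\Omega (S-K)^+\,\mathrm{d}\mu_1(S)$ and $P(K)=\int_\Omega (K-S)^+\,\mathrm{d}\mu_2(S)$ for all $K\ge 0$. Then there is a unique Borel probability measure $\mu_Q$ on $\Omega$ that prices both all European calls and all European puts of maturity $t$ by expectation of terminal payoff, i.e. $C(K)=\int_\Omega (S-K)^+\,\mathrm{d}\mu_Q(S)$ and $P(K)=\int_\Omega (K-S)^+\,\mathrm{d}\mu_Q(S)$ for every $K\ge 0$.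
   Context: $\Omega=[0,\infty)$ is the set of possible values $S=S_t$ of the underlying at maturity $t$. Option prices and the forward price are expressed in units payable at maturity (undiscounted), so that put-call parity reads $C(K)-P(K)+K=F$. The forward is assumed to exist and be tradable; it may be the arbitrage (risk-neutral) forward $S_0e^{(r-\delta)(t-t_0)}$ or any other tradable forward price. *)

theory Defs
  imports "HOL-Probability.Probability"
begin

definition borel_prob_Omega :: "real measure \<Rightarrow> bool" where
  "borel_prob_Omega M \<longleftrightarrow> sets M = sets (restrict_space borel {0..}) \<and> prob_space M"

definition finite_first_moment :: "real measure \<Rightarrow> bool" where
  "finite_first_moment M \<longleftrightarrow> integrable M (\<lambda>S. S)"

definition prices_calls :: "real measure \<Rightarrow> (real \<Rightarrow> real) \<Rightarrow> bool" where
  "prices_calls M C \<longleftrightarrow> (\<forall>K\<ge>0. has_bochner_integral M (\<lambda>S. max (S - K) 0) (C K))"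

definition prices_puts :: "real measure \<Rightarrow> (real \<Rightarrow> real) \<Rightarrow> bool" where
  "prices_puts M P \<longleftrightarrow> (\<forall>K\<ge>0. has_bochner_integral M (\<lambda>S. max (K - S) 0) (P K))"

end

theory Submission
  imports Defs
begin

text \<open>Existence: under \<mu>1 the put payoff is the call payoff minus S plus K, and parity with
the strike-zero prices C 0 = E[S], P 0 = 0 identifies F with E[S], so \<mu>1 also prices every put.
Uniqueness: the right difference quotients (P (K + h) - P K) / h are the expectations of
piecewise linear functions, bounded by 1, that converge to the indicator of [0, K]; by dominated
convergence the put prices determine the distribution function of the pricing measure, and hence
the measure itself.\<close>

lemma borel_prob_Omega_space:
  assumes "borel_prob_Omega M" shows "space M = {0..}"
proof -
  have "sets M = sets (restrict_space borel {0..})"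
    using assms unfolding borel_prob_Omega_def by simp
  then have "space M = space (restrict_space borel {0..})"
    by (rule sets_eq_imp_space_eq)
  then show ?thesis by (simp add: space_restrict_space)
qed

lemma borel_prob_Omega_measurable:
  "borel_prob_Omega M \<Longrightarrow> (f :: real \<Rightarrow> real) \<in> borel_measurable borel \<Longrightarrow> f \<in> borel_measurable M"
  unfolding borel_prob_Omega_def
  using measurable_cong_sets[of M "restrict_space borel {0..}" borel borel]
  by (metis measurable_restrict_space1)

lemma borel_prob_Omega_sets_iff:
  "borel_prob_Omega M \<Longrightarrow> A \<in> sets M \<longleftrightarrow> A \<in> sets borel \<and> A \<subseteq> {0..}"
  unfolding borel_prob_Omega_def by (auto simp: sets_restrict_space_iff)

lemma prices_calls_zero_strike:
  assumes "borel_prob_Omega M" "prices_calls M C"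
  shows "has_bochner_integral M (\<lambda>S. S) (C 0)"
proof -
  have "has_bochner_integral M (\<lambda>S. max (S - 0) 0) (C 0)"
    using assms(2) order_refl unfolding prices_calls_def by blast
  then show ?thesis
    by (rule has_bochner_integral_cong[THEN iffD1, rotated 3])
       (auto simp: borel_prob_Omega_space[OF assms(1)])
qed

lemma prices_puts_zero_strike:
  assumes "borel_prob_Omega M" "prices_puts M P"
  shows "P 0 = 0"
proof -
  have "has_bochner_integral M (\<lambda>S. max (0 - S) 0) (P 0)"
    using assms(2) order_refl unfolding prices_puts_def by blast
  then have "has_bochner_integral M (\<lambda>S. 0) (P 0)"
    by (rule has_bochner_integral_cong[THEN iffD1, rotated 3])
       (auto simp: borel_prob_Omega_space[OF assms(1)])
  then show ?thesis using has_bochner_integral_zero has_bochner_integral_eq by blast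
qed

lemma prices_puts_by_parity:
  assumes "prob_space M" "prices_calls M C" "integrable M (\<lambda>S. S)"
    and parity: "\<forall>K\<ge>0. P K = C K + K - integral\<^sup>L M (\<lambda>S. S)"
  shows "prices_puts M P"
  unfolding prices_puts_def
proof (intro allI impI)
  interpret prob_space M by fact
  fix K :: real assume "K \<ge> 0"
  have "has_bochner_integral M (\<lambda>_. K) K"
    using has_bochner_integral_integrable[of M "\<lambda>_. K"] by (simp add: prob_space)
  then have integral: "has_bochner_integral M (\<lambda>S. max (S - K) 0 - S + K)
      (C K - integral\<^sup>L M (\<lambda>S. S) + K)"
    using assms(2,3) \<open>K \<ge> 0\<close> unfolding prices_calls_def
    by (intro has_bochner_integral_add has_bochner_integral_diff has_bochner_integral_integrable)
       auto
  have "(\<lambda>S. max (K - S) 0) = (\<lambda>S. max (S - K) 0 - S + K)"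
    by (auto simp: max_def)
  moreover have "P K = C K - integral\<^sup>L M (\<lambda>S. S) + K"
    using parity \<open>K \<ge> 0\<close> by simp
  ultimately show "has_bochner_integral M (\<lambda>S. max (K - S) 0) (P K)"
    using integral by (simp only:)
qed

lemma put_payoff_quotient_bounds:
  fixes K h x :: real
  assumes "0 < h"
  shows "0 \<le> (max (K + h - x) 0 - max (K - x) 0) / h"
    and "(max (K + h - x) 0 - max (K - x) 0) / h \<le> 1"
  using assms by (auto simp: max_def field_simps)

lemma put_payoff_quotient_tendsto:
  fixes K x :: real
  shows "(\<lambda>n. (max (K + 1 / Suc n - x) 0 - max (K - x) 0) / (1 / Suc n))
           \<longlonglongrightarrow> indicator {..K} x"
proof (cases "x \<le> K")
  case True
  have "(max (K + 1 / Suc n - x) 0 - max (K - x) 0) / (1 / Suc n) = 1" for n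
  proof -
    have "0 < 1 / real (Suc n)" by simp
    then have "max (K + 1 / Suc n - x) 0 = K + 1 / Suc n - x" "max (K - x) 0 = K - x"
      using True by (simp_all only: max_absorb1 add_increasing2 order.strict_implies_order
          diff_ge_0_iff_ge)
    then show ?thesis by simp
  qed
  then show ?thesis using True by simp
next
  case False
  obtain N :: nat where "1 / (x - K) < N" using reals_Archimedean2 by blast
  have "(max (K + 1 / Suc n - x) 0 - max (K - x) 0) / (1 / Suc n) = 0" if "n \<ge> N" for n
  proof -
    have "1 / (x - K) < Suc n" using \<open>1 / (x - K) < N\<close> that by linarith
    then have "1 / Suc n < x - K" using False by (simp add: field_simps)
    then show ?thesis using False by (simp add: max_def)
  qed
  then have "eventually (\<lambda>n. (max (K + 1 / Suc n - x) 0 - max (K - x) 0) / (1 / Suc n) = 0)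
      sequentially"
    unfolding eventually_sequentially by blast
  then show ?thesis using False by (simp add: tendsto_eventually)
qed

lemma put_price_quotient_tendsto:
  assumes M: "borel_prob_Omega M" and P: "prices_puts M P" and "K \<ge> 0"
  shows "(\<lambda>n. (P (K + 1 / Suc n) - P K) / (1 / Suc n)) \<longlonglongrightarrow> measure M {0..K}"
proof -
  interpret prob_space M using M unfolding borel_prob_Omega_def by simp
  define q where "q n S = (max (K + 1 / Suc n - S) 0 - max (K - S) 0) / (1 / Suc n)" for n S
  have "has_bochner_integral M (q n) ((P (K + 1 / Suc n) - P K) / (1 / Suc n))" for n
    using P \<open>K \<ge> 0\<close> unfolding prices_puts_def q_def
    by (intro has_bochner_integral_divide_zero has_bochner_integral_diff) auto
  then have q_integral: "integral\<^sup>L M (q n) = (P (K + 1 / Suc n) - P K) / (1 / Suc n)" for n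
    by (simp add: has_bochner_integral_integral_eq)
  have K_sets: "{0..K} \<in> sets M"
    using borel_prob_Omega_sets_iff[OF M] by auto
  have "(\<lambda>n. integral\<^sup>L M (q n)) \<longlonglongrightarrow> integral\<^sup>L M (indicator {0..K} :: real \<Rightarrow> real)"
  proof (rule integral_dominated_convergence[where w = "\<lambda>_. 1"])
    show "(indicator {0..K} :: real \<Rightarrow> real) \<in> borel_measurable M"
      using K_sets by measurable
    show "q n \<in> borel_measurable M" for n
      by (rule borel_prob_Omega_measurable[OF M]) (unfold q_def, measurable)
    show "AE S in M. norm (q n S) \<le> 1" for n
      using put_payoff_quotient_bounds[of "1 / Suc n" K] by (simp add: q_def)
    show "AE S in M. (\<lambda>n. q n S) \<longlonglongrightarrow> indicator {0..K} S"
    proof (rule AE_I2)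
      fix S assume "S \<in> space M"
      then have "indicator {..K} S = (indicator {0..K} S :: real)"
        using borel_prob_Omega_space[OF M] by (auto simp: indicator_def)
      then show "(\<lambda>n. q n S) \<longlonglongrightarrow> indicator {0..K} S"
        using put_payoff_quotient_tendsto[of K S] unfolding q_def by simp
    qed
  qed simp
  then show ?thesis using K_sets by (simp add: q_integral)
qed

text \<open>The identity map pushes a measure on [0, \<infinity>) forward to a distribution on the whole
real line, where distribution functions determine the measure.\<close>

lemma borel_prob_Omega_id_measurable: "borel_prob_Omega M \<Longrightarrow> (\<lambda>x. x) \<in> borel_measurable M"
  using borel_prob_Omega_measurable[of M "\<lambda>x. x"] by simp

lemma borel_prob_Omega_emeasure_distr_id:
  assumes M: "borel_prob_Omega M" and A: "A \<in> sets M"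
  shows "emeasure (distr M borel (\<lambda>x. x)) A = emeasure M A"
proof -
  have "A \<in> sets borel" "A \<inter> space M = A"
    using A borel_prob_Omega_sets_iff[OF M] borel_prob_Omega_space[OF M] by auto
  then show ?thesis
    using emeasure_distr[OF borel_prob_Omega_id_measurable[OF M]] by simp
qed

lemma borel_prob_Omega_cdf_distr_id:
  assumes M: "borel_prob_Omega M"
  shows "cdf (distr M borel (\<lambda>x. x)) x = (if x < 0 then 0 else measure M {0..x})"
proof -
  have "cdf (distr M borel (\<lambda>x. x)) x = measure M ({..x} \<inter> {0..})"
    unfolding cdf_def borel_prob_Omega_space[OF M, symmetric]
    using measure_distr[OF borel_prob_Omega_id_measurable[OF M], of "{..x}"] by simp
  moreover have "x < 0 \<Longrightarrow> {..x} \<inter> {0..} = {}" "\<not> x < 0 \<Longrightarrow> {..x} \<inter> {0..} = {0..x}"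
    by auto
  ultimately show ?thesis by simp
qed

lemma borel_prob_Omega_real_distribution_distr_id:
  assumes M: "borel_prob_Omega M"
  shows "real_distribution (distr M borel (\<lambda>x. x))"
proof -
  interpret prob_space M using M unfolding borel_prob_Omega_def by simp
  show ?thesis
    unfolding real_distribution_def real_distribution_axioms_def
    using prob_space_distr[OF borel_prob_Omega_id_measurable[OF M]] by simp
qed

lemma borel_prob_Omega_eqI:
  assumes M: "borel_prob_Omega M" and N: "borel_prob_Omega N"
    and eq: "\<And>K. K \<ge> 0 \<Longrightarrow> measure M {0..K} = measure N {0..K}"
  shows "M = N"
proof -
  have distr_eq: "distr M borel (\<lambda>x. x) = distr N borel (\<lambda>x. x)"
  proof (rule cdf_unique[OF borel_prob_Omega_real_distribution_distr_id[OF M]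
        borel_prob_Omega_real_distribution_distr_id[OF N]])
    show "cdf (distr M borel (\<lambda>x. x)) = cdf (distr N borel (\<lambda>x. x))"
      by (simp add: fun_eq_iff eq borel_prob_Omega_cdf_distr_id[OF M]
          borel_prob_Omega_cdf_distr_id[OF N])
  qed
  have sets_eq: "sets M = sets N"
    using M N unfolding borel_prob_Omega_def by simp
  show ?thesis
  proof (rule measure_eqI[OF sets_eq])
    fix A assume A: "A \<in> sets M"
    have "emeasure M A = emeasure (distr M borel (\<lambda>x. x)) A"
      using borel_prob_Omega_emeasure_distr_id[OF M A] by simp
    also have "\<dots> = emeasure N A"
      using borel_prob_Omega_emeasure_distr_id[OF N] A sets_eq by (simp add: distr_eq)
    finally show "emeasure M A = emeasure N A" .
  qed
qed

lemma prices_puts_unique: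
  assumes "borel_prob_Omega M" "prices_puts M P" "borel_prob_Omega N" "prices_puts N P"
  shows "M = N"
proof (rule borel_prob_Omega_eqI[OF assms(1,3)])
  fix K :: real assume "K \<ge> 0"
  show "measure M {0..K} = measure N {0..K}"
    using LIMSEQ_unique put_price_quotient_tendsto assms \<open>K \<ge> 0\<close> by blast
qed

theorem theorem1:
  fixes C P :: "real \<Rightarrow> real" and F :: real and \<mu>1 \<mu>2 :: "real measure"
  assumes parity: "\<forall>K\<ge>0. C K - P K + K = F"
    and m1: "borel_prob_Omega \<mu>1" and fm1: "finite_first_moment \<mu>1"
    and m2: "borel_prob_Omega \<mu>2" and fm2: "finite_first_moment \<mu>2"
    and calls: "prices_calls \<mu>1 C"
    and puts: "prices_puts \<mu>2 P"
  shows "\<exists>!\<mu>Q. borel_prob_Omega \<mu>Q \<and> prices_calls \<mu>Q C \<and> prices_puts \<mu>Q P"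
proof -
  have mean: "has_bochner_integral \<mu>1 (\<lambda>S. S) (C 0)"
    using prices_calls_zero_strike[OF m1 calls] .
  have "F = integral\<^sup>L \<mu>1 (\<lambda>S. S)"
    using parity prices_puts_zero_strike[OF m2 puts] has_bochner_integral_integral_eq[OF mean]
    by force
  then have puts1: "prices_puts \<mu>1 P"
    using m1 calls fm1 parity unfolding borel_prob_Omega_def finite_first_moment_def
    by (intro prices_puts_by_parity) (auto simp: algebra_simps)
  show ?thesis
    using m1 calls puts1 prices_puts_unique[OF _ _ m1 puts1] by blast
qed

end
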